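(* Let $\lambda>0$, $n\ge0$ an integer and $x\in[-1,1]$. Then $$D^\lambda_+C^\lambda_n(x)=c_{n,\lambda}\frac{n(n+2\lambda)}{n+\lambda}\,\frac{1+x}2\,{}_2F_1\!\Big(-n+1,\,n+2\lambda+1;\,\lambda+1;\,\tfrac{1-x}2\Big),$$ $$D^\lambda_-C^\lambda_n(x)=c_{n,\lambda}\frac{n(n+2\lambda)}{\lambda+1}\,\frac{1-x}2\,{}_2F_1\!\Big(-n+1,\,n+2\lambda+1;\,\lambda+2;\,\tfrac{1-x}2\Big),$$ where $c_{n,\lambda}=\frac{\sqrt\pi(2\lambda)_n}{n!}\frac{\Gamma(\lambda+\frac12)}{\Gamma(\lambda+1)}$.
   Context: $C^\mu_n$ are Gegenbauer polynomials with generating function $(1-2xr+r^2)^{-\mu}$; ${}_2F_1$ is the Gauss hypergeometric function and $(a)_k$ the Pochhammer symbol. For $f$ absolutely continuous on $[-1,1]$ and $\lambda\ge0$: $D^\lambda_+f(x)=(1+x)\frac{d}{dx}\Big\{(1+x)^{-\lambda}\int_{-1}^x(x-\tau)^{-1/2}(1+\tau)^{\lambda-1/2}f(\tau)\,d\tau\Big\}$, $D^\lambda_-f(x)=(1-x)\frac{d}{dx}\Big\{(1-x)^{-\lambda}\int_x^1(\tau-x)^{-1/2}(1-\tau)^{\lambda-1/2}f(\tau)\,d\tau\Big\}$. *)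

theory Defs
  imports "HOL-Analysis.Analysis" "HOL-Computational_Algebra.Formal_Power_Series"
begin

text \<open>Gegenbauer polynomial: coefficient of r^n in the formal power series
  (1 - 2 x r + r^2)^(-mu) = (1 + u)^(-mu) with u = r^2 - 2 x r.\<close>
definition gegenbauer :: "nat \<Rightarrow> real \<Rightarrow> real \<Rightarrow> real" where
  "gegenbauer n mu x =
     fps_nth (fps_compose (fps_binomial (- mu)) (fps_X ^ 2 - fps_const (2 * x) * fps_X)) n"

definition hyp2F1 :: "real \<Rightarrow> real \<Rightarrow> real \<Rightarrow> real \<Rightarrow> real" where
  "hyp2F1 a b c z =
     (\<Sum>k. pochhammer a k * pochhammer b k / (pochhammer c k * fact k) * z ^ k)"

text \<open>Fractional-type operators D^lambda_+ and D^lambda_- on [-1,1]; the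
  derivative is taken within [-1,1] (one-sided at the endpoints).\<close>
definition D_plus :: "real \<Rightarrow> (real \<Rightarrow> real) \<Rightarrow> real \<Rightarrow> real" where
  "D_plus lam f x = (1 + x) *
     vector_derivative
       (\<lambda>y. (1 + y) powr (- lam) *
             integral {-1..y} (\<lambda>t. (y - t) powr (-1/2) * (1 + t) powr (lam - 1/2) * f t))
       (at x within {-1..1})"

definition D_minus :: "real \<Rightarrow> (real \<Rightarrow> real) \<Rightarrow> real \<Rightarrow> real" where
  "D_minus lam f x = (1 - x) *
     vector_derivative
       (\<lambda>y. (1 - y) powr (- lam) *
             integral {y..1} (\<lambda>t. (t - y) powr (-1/2) * (1 - t) powr (lam - 1/2) * f t))
       (at x within {-1..1})"

definition c_const :: "nat \<Rightarrow> real \<Rightarrow> real" where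
  "c_const n lam = sqrt pi * pochhammer (2 * lam) n / fact n * (Gamma (lam + 1/2) / Gamma (lam + 1))"

end

theory Submission
  imports Defs
begin

text \<open>Expanding the generating function gives
  C_n^lam(t) = (2 lam)_n / n! * 2F1(-n, n + 2 lam; lam + 1/2; (1 - t)/2), a polynomial in 1 - t,
  and the same computation gives one in 1 + t. Both operators act diagonally on such powers: by a
  Beta integral, the function differentiated in D_plus maps (1 + t)^k to
  Beta(lam + k + 1/2, 1/2) (1 + y)^k, so D_plus multiplies (1 + t)^k by k Beta(lam + k + 1/2, 1/2);
  D_minus acts in the same way on (1 - t)^k, up to sign. After an index shift this gives
  D_minus C_n^lam directly and D_plus C_n^lam as a 2F1 in (1 + x)/2, which the terminating
  connection formula between 2F1 at z and at 1 - z (a consequence of the Chu-Vandermonde sum)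
  turns into the stated 2F1 in (1 - x)/2.\<close>

section \<open>Binomial series composed with power series\<close>

lemma fps_binomial_ODE:
  "(1 + fps_X) * fps_deriv (fps_binomial a) = fps_const (a::'a::field_char_0) * fps_binomial a"
proof -
  have u: "fps_nth (1 + fps_X :: 'a fps) 0 \<noteq> 0" by simp
  have "(1 + fps_X) * fps_deriv (fps_binomial a)
      = (1 + fps_X) * (fps_const a * fps_binomial a * inverse (1 + fps_X))"
    by (simp add: fps_binomial_deriv fps_divide_unit[OF u])
  also have "\<dots> = fps_const a * fps_binomial a * ((1 + fps_X) * inverse (1 + fps_X))"
    by (simp add: algebra_simps)
  finally show ?thesis using inverse_mult_eq_1'[OF u] by simp
qed

lemma fps_binomial_compose_ODE:
  fixes h :: "'a::field_char_0 fps" assumes h0: "fps_nth h 0 = 0"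
  shows "(1 + h) * fps_deriv (fps_binomial a oo h) = fps_const a * fps_deriv h * (fps_binomial a oo h)"
proof -
  have "((1 + fps_X) * fps_deriv (fps_binomial a)) oo h = (1 + h) * (fps_deriv (fps_binomial a) oo h)"
    by (simp add: fps_compose_mult_distrib[OF h0] fps_compose_add_distrib h0)
  then have "(1 + h) * (fps_deriv (fps_binomial a) oo h) = fps_const a * (fps_binomial a oo h)"
    by (simp add: fps_binomial_ODE fps_const_mult_apply_left)
  then show ?thesis
    by (simp add: fps_compose_deriv[OF h0] mult.assoc[symmetric])
qed

text \<open>D and fps_binomial a oo h solve the same linear ODE, so their quotient has derivative zero.\<close>
lemma fps_binomial_compose_ODE_unique:
  fixes h D :: "'a::field_char_0 fps" assumes h0: "fps_nth h 0 = 0"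
    and ode: "(1 + h) * fps_deriv D = fps_const a * fps_deriv h * D" and D0: "fps_nth D 0 = 1"
  shows "D = fps_binomial a oo h"
proof -
  define C where "C = fps_binomial a oo h"
  have C0: "fps_nth C 0 \<noteq> 0" by (simp add: C_def)
  have odeC: "(1 + h) * fps_deriv C = fps_const a * fps_deriv h * C"
    unfolding C_def by (rule fps_binomial_compose_ODE[OF h0])
  have "(1 + h) * (fps_deriv D * C - D * fps_deriv C)
      = ((1 + h) * fps_deriv D) * C - D * ((1 + h) * fps_deriv C)"
    by (simp add: algebra_simps)
  also have "\<dots> = 0" by (simp only: ode odeC) (simp add: algebra_simps)
  finally have "(1 + h) * (fps_deriv D * C - D * fps_deriv C) = 0" .
  moreover have "1 + h \<noteq> 0"
    using h0 by (metis add.right_neutral fps_add_nth fps_one_nth zero_neq_one fps_zero_nth)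
  ultimately have wronskian: "fps_deriv D * C = D * fps_deriv C" by simp
  have "fps_deriv (D * inverse C) = inverse C ^ 2 * (fps_deriv D * C - D * fps_deriv C)
      + fps_deriv D * inverse C * (1 - C * inverse C)"
    by (simp add: fps_inverse_deriv[OF C0] algebra_simps power2_eq_square)
  also have "\<dots> = 0" using wronskian inverse_mult_eq_1'[OF C0] by simp
  finally have "D * inverse C = fps_const (fps_nth (D * inverse C) 0)"
    using fps_deriv_eq_0_iff by blast
  also have "\<dots> = 1" using D0 by (simp add: C_def)
  finally have "D * inverse C * C = C" by simp
  moreover have "D = D * (inverse C * C)" using inverse_mult_eq_1[OF C0] by simp
  ultimately show ?thesis unfolding C_def by (metis mult.assoc)
qed

lemma fps_binomial_compose_mult:
  fixes f g :: "'a::field_char_0 fps" assumes f0: "fps_nth f 0 = 0" and g0: "fps_nth g 0 = 0"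
  shows "fps_binomial a oo (f + g + f * g) = (fps_binomial a oo f) * (fps_binomial a oo g)"
proof -
  define Cf where "Cf = fps_binomial a oo f"
  define Cg where "Cg = fps_binomial a oo g"
  have ef: "(1 + f) * fps_deriv Cf = fps_const a * fps_deriv f * Cf"
    unfolding Cf_def by (rule fps_binomial_compose_ODE[OF f0])
  have eg: "(1 + g) * fps_deriv Cg = fps_const a * fps_deriv g * Cg"
    unfolding Cg_def by (rule fps_binomial_compose_ODE[OF g0])
  have "(1 + (f + g + f * g)) * fps_deriv (Cf * Cg)
      = ((1 + f) * fps_deriv Cf) * ((1 + g) * Cg) + ((1 + g) * fps_deriv Cg) * ((1 + f) * Cf)"
    by (simp add: algebra_simps)
  also have "\<dots> = fps_const a * fps_deriv (f + g + f * g) * (Cf * Cg)"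
    by (simp only: ef eg) (simp add: algebra_simps)
  finally have "Cf * Cg = fps_binomial a oo (f + g + f * g)"
    by (rule fps_binomial_compose_ODE_unique[rotated])
      (use f0 g0 in \<open>simp_all add: Cf_def Cg_def\<close>)
  then show ?thesis by (simp add: Cf_def Cg_def)
qed

definition fps_binomial_scaled :: "'a::field_char_0 \<Rightarrow> 'a \<Rightarrow> 'a fps" where
  "fps_binomial_scaled s a = fps_binomial a oo (fps_const s * fps_X)"

lemma fps_binomial_scaled_mult:
  "fps_binomial_scaled s a * fps_binomial_scaled s b = fps_binomial_scaled s (a + b)"
  by (simp add: fps_binomial_scaled_def fps_compose_mult_distrib[symmetric] fps_binomial_add_mult)

lemma fps_binomial_scaled_0 [simp]: "fps_binomial_scaled s 0 = 1"
  by (simp add: fps_binomial_scaled_def)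

lemma fps_binomial_scaled_1: "fps_binomial_scaled s 1 = 1 + fps_const s * fps_X"
  by (simp add: fps_binomial_scaled_def fps_binomial_1 fps_compose_add_distrib)

lemma fps_binomial_scaled_power:
  "fps_binomial_scaled s a ^ k = fps_binomial_scaled s (of_nat k * a)"
  by (simp add: fps_binomial_scaled_def fps_compose_power fps_binomial_power)

lemma fps_binomial_scaled_nth [simp]: "fps_nth (fps_binomial_scaled s a) n = s ^ n * (a gchoose n)"
  by (simp add: fps_binomial_scaled_def)

text \<open>For s = \<plusminus>1 write X^2 - 2xX = f + w + f w with 1 + f = (1 + sX)^2 and
  w = cX/(1 + sX)^2; then (1 + X^2 - 2xX)^a = (1 + sX)^(2a) (1 + w)^a, and only the first
  n + 1 terms of the binomial series of (1 + w)^a contribute to the coefficient of X^n.\<close>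
lemma fps_nth_binomial_compose_quadratic:
  fixes s c x a :: "'a::field_char_0" assumes s: "s * s = 1" and c: "c = - 2 * x - 2 * s"
  shows "fps_nth (fps_binomial a oo (fps_X ^ 2 - fps_const (2 * x) * fps_X)) n =
    (\<Sum>k\<le>n. (a gchoose k) * c ^ k * (s ^ (n - k) * ((2 * a - 2 * of_nat k) gchoose (n - k))))"
proof -
  define L where "L = fps_const s * fps_X"
  define f where "f = L + L + L * L"
  define w where "w = fps_const c * fps_X * fps_binomial_scaled s (-2)"
  have L0: "fps_nth L 0 = 0" by (simp add: L_def)
  have one_plus_f: "1 + f = fps_binomial_scaled s 2"
  proof -
    have "1 + f = (1 + L) * (1 + L)" by (simp add: f_def algebra_simps)
    also have "\<dots> = fps_binomial_scaled s 2"
      by (simp add: fps_binomial_scaled_1[symmetric] L_def fps_binomial_scaled_mult)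
    finally show ?thesis .
  qed
  have quadratic: "f + w + f * w = fps_X ^ 2 - fps_const (2 * x) * fps_X"
  proof -
    have "f + w + f * w = f + fps_const c * fps_X * (fps_binomial_scaled s (-2) * (1 + f))"
      by (simp add: w_def algebra_simps)
    also have "\<dots> = f + fps_const c * fps_X" by (simp add: one_plus_f fps_binomial_scaled_mult)
    also have "\<dots> = fps_X ^ 2 - fps_const (2 * x) * fps_X"
    proof -
      have "L * L = fps_const (s * s) * fps_X ^ 2" by (simp add: L_def power2_eq_square algebra_simps)
      moreover have "fps_const c = - fps_const (2 * x) - fps_const s - fps_const s"
        by (simp add: c)
      ultimately show ?thesis
        using s c by (simp add: f_def L_def algebra_simps) (simp add: eq_neg_iff_add_eq_0 add.assoc)
    qed
    finally show ?thesis .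
  qed
  have "fps_binomial a oo f = fps_binomial_scaled s a * fps_binomial_scaled s a"
    unfolding f_def using fps_binomial_compose_mult[OF L0 L0, of a]
    by (simp only: fps_binomial_scaled_def L_def)
  also have "\<dots> = fps_binomial_scaled s (2 * a)"
    unfolding fps_binomial_scaled_mult by (simp only: mult_2)
  finally have factor: "fps_binomial a oo (fps_X ^ 2 - fps_const (2 * x) * fps_X)
      = fps_binomial_scaled s (2 * a) * (fps_binomial a oo w)"
    using fps_binomial_compose_mult[of f w a] quadratic by (simp add: f_def L_def w_def)
  have w_power: "w ^ k = fps_X ^ k * (fps_const (c ^ k) * fps_binomial_scaled s (- 2 * of_nat k))" for k
    by (simp add: w_def power_mult_distrib fps_binomial_scaled_power fps_const_power algebra_simps)
  define T where "T = (\<Sum>k\<le>n. fps_const (a gchoose k) * w ^ k)"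
  have truncate: "fps_nth (fps_binomial a oo w) j = fps_nth T j" if "j \<le> n" for j
  proof -
    have "fps_nth (fps_binomial a oo w) j = (\<Sum>i\<le>n. (a gchoose i) * fps_nth (w ^ i) j)"
      unfolding fps_compose_nth atLeast0AtMost fps_binomial_nth
      by (rule sum.mono_neutral_left) (use that in \<open>auto simp: w_power fps_X_power_mult_nth\<close>)
    then show ?thesis by (simp add: T_def fps_sum_nth)
  qed
  have "fps_nth (fps_binomial_scaled s (2 * a) * (fps_binomial a oo w)) n
      = fps_nth (fps_binomial_scaled s (2 * a) * T) n"
    unfolding fps_mult_nth by (rule sum.cong) (auto simp: truncate)
  also have "fps_binomial_scaled s (2 * a) * T = (\<Sum>k\<le>n. fps_const ((a gchoose k) * c ^ k)
      * (fps_X ^ k * fps_binomial_scaled s (2 * a - 2 * of_nat k)))"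
    unfolding T_def sum_distrib_left w_power
  proof (rule sum.cong[OF refl])
    fix k
    have "fps_binomial_scaled s (2 * a) * fps_binomial_scaled s (- 2 * of_nat k)
        = fps_binomial_scaled s (2 * a - 2 * of_nat k)"
      by (simp add: fps_binomial_scaled_mult)
    then show "fps_binomial_scaled s (2 * a) * (fps_const (a gchoose k) * (fps_X ^ k *
        (fps_const (c ^ k) * fps_binomial_scaled s (- 2 * of_nat k)))) = fps_const ((a gchoose k) * c ^ k)
        * (fps_X ^ k * fps_binomial_scaled s (2 * a - 2 * of_nat k))"
      by (simp add: algebra_simps)
  qed
  finally show ?thesis
    unfolding factor fps_sum_nth fps_mult_left_const_nth fps_X_power_mult_nth fps_binomial_scaled_nth
    by simp
qed

section \<open>Explicit expansion of the Gegenbauer polynomials\<close>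

definition hyp2F1_coeff :: "real \<Rightarrow> real \<Rightarrow> real \<Rightarrow> nat \<Rightarrow> real" where
  "hyp2F1_coeff a b c k = pochhammer a k * pochhammer b k / (pochhammer c k * fact k)"

lemma hyp2F1_eq_sum_hyp2F1_coeff:
  "hyp2F1 (- real m) b c z = (\<Sum>k\<le>m. hyp2F1_coeff (- real m) b c k * z ^ k)"
  unfolding hyp2F1_def hyp2F1_coeff_def
  by (rule suminf_finite) (auto simp: pochhammer_of_nat_eq_0_iff)

definition gegenbauer_coeff :: "real \<Rightarrow> nat \<Rightarrow> nat \<Rightarrow> real" where
  "gegenbauer_coeff lam n k =
     pochhammer (2 * lam) n / fact n * hyp2F1_coeff (- real n) (real n + 2 * lam) (lam + 1/2) k / 2 ^ k"

lemma gbinomial_eq_gegenbauer_coeff: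
  fixes lam :: real assumes lam: "lam > -1/2" and kn: "k \<le> n"
  shows "((-lam) gchoose k) * 2 ^ k * ((-1) ^ (n - k) * ((2 * (-lam) - 2 * real k) gchoose (n - k)))
    = gegenbauer_coeff lam n k"
proof -
  define P where "P = pochhammer (2 * lam + 2 * real k) (n - k)"
  have g1: "(-lam) gchoose k = (-1) ^ k * pochhammer lam k / fact k"
    by (simp add: gbinomial_pochhammer)
  have "- (2 * (-lam) - 2 * real k) = 2 * lam + 2 * real k" by simp
  then have g2: "(2 * (-lam) - 2 * real k) gchoose (n - k) = (-1) ^ (n - k) * P / fact (n - k)"
    unfolding gbinomial_pochhammer P_def by metis
  have m1: "(-1::real) ^ (n - k) * (-1) ^ (n - k) = 1"
    by (simp add: power_mult_distrib[symmetric])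
  have L: "((-lam) gchoose k) * 2 ^ k * ((-1) ^ (n - k) * ((2 * (-lam) - 2 * real k) gchoose (n - k)))
      = (-1) ^ k * pochhammer lam k * 2 ^ k * P / (fact k * fact (n - k))"
    unfolding g1 g2 using m1 by (simp add: field_simps)
  have p1: "pochhammer (2 * lam) n * pochhammer (real n + 2 * lam) k = pochhammer (2 * lam) (2 * k) * P"
  proof -
    have "pochhammer (2 * lam) (n + k) = pochhammer (2 * lam) n * pochhammer (real n + 2 * lam) k"
      using pochhammer_product'[of "2 * lam" n k] by (simp add: add.commute)
    moreover have "pochhammer (2 * lam) (2 * k + (n - k)) = pochhammer (2 * lam) (2 * k) * P"
      using pochhammer_product'[of "2 * lam" "2 * k" "n - k"] by (simp add: P_def)
    moreover have "2 * k + (n - k) = n + k" using kn by simp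
    ultimately show ?thesis by simp
  qed
  have p2: "pochhammer (2 * lam) (2 * k) = 2 ^ (2 * k) * pochhammer lam k * pochhammer (lam + 1/2) k"
    using pochhammer_double[of lam k] by simp
  have p3: "pochhammer (- real n) k * fact (n - k) = (-1) ^ k * fact n"
  proof -
    have "fact n = (pochhammer 1 ((n - k) + k) :: real)" using kn by (simp add: pochhammer_fact)
    also have "\<dots> = fact (n - k) * pochhammer (real n - real k + 1) k"
      using pochhammer_product'[of "1::real" "n - k" k] kn
      by (simp add: of_nat_diff add.commute pochhammer_fact)
    finally show ?thesis by (simp add: pochhammer_minus)
  qed
  have nz: "pochhammer (lam + 1/2) k > 0" by (rule pochhammer_pos) (use lam in simp)
  have "gegenbauer_coeff lam n k = (pochhammer (2 * lam) n * pochhammer (real n + 2 * lam) k)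
        * (pochhammer (- real n) k * fact (n - k))
        / (fact n * fact (n - k) * pochhammer (lam + 1/2) k * fact k * 2 ^ k)"
    unfolding gegenbauer_coeff_def hyp2F1_coeff_def by (simp add: field_simps)
  also have "\<dots> = 2 ^ (2 * k) * pochhammer lam k * pochhammer (lam + 1/2) k * P * ((-1) ^ k * fact n)
        / (fact n * fact (n - k) * pochhammer (lam + 1/2) k * fact k * 2 ^ k)"
    unfolding p1 p2 p3 ..
  also have "\<dots> = (-1) ^ k * pochhammer lam k * 2 ^ k * P / (fact k * fact (n - k))"
    using nz by (simp add: field_simps power_mult power2_eq_square)
  finally show ?thesis using L by simp
qed

lemma gegenbauer_expansion:
  fixes lam s t :: real assumes lam: "lam > -1/2" and s: "s * s = 1"
  shows "gegenbauer n lam t = s ^ n * (\<Sum>k\<le>n. gegenbauer_coeff lam n k * (1 - s * t) ^ k)"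
proof -
  have "gegenbauer n lam t = (\<Sum>k\<le>n. ((-lam) gchoose k) * (2 * s * (1 - s * t)) ^ k
      * ((-s) ^ (n - k) * ((2 * (-lam) - 2 * of_nat k) gchoose (n - k))))"
    unfolding gegenbauer_def
    by (rule fps_nth_binomial_compose_quadratic) (use s in \<open>simp_all add: algebra_simps\<close>)
  also have "\<dots> = (\<Sum>k\<le>n. s ^ n * (gegenbauer_coeff lam n k * (1 - s * t) ^ k))"
  proof (rule sum.cong[OF refl])
    fix k assume "k \<in> {..n}"
    then have kn: "k \<le> n" by simp
    have "s ^ k * (-s) ^ (n - k) = s ^ n * (-1) ^ (n - k)"
      using kn by (simp add: power_minus[of s] power_add[symmetric])
    then show "((-lam) gchoose k) * (2 * s * (1 - s * t)) ^ k
        * ((-s) ^ (n - k) * ((2 * (-lam) - 2 * of_nat k) gchoose (n - k)))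
        = s ^ n * (gegenbauer_coeff lam n k * (1 - s * t) ^ k)"
      unfolding gbinomial_eq_gegenbauer_coeff[OF lam kn, symmetric] power_mult_distrib
      by (simp add: algebra_simps)
  qed
  finally show ?thesis by (simp add: sum_distrib_left)
qed

section \<open>The operators on polynomials\<close>

lemma has_integral_Beta_interval:
  fixes a b mu nu :: real assumes ab: "a < b" and mu: "mu > 0" and nu: "nu > 0"
  shows "((\<lambda>t. (t - a) powr (mu - 1) * (b - t) powr (nu - 1)) has_integral
           (b - a) powr (mu + nu - 1) * Beta mu nu) {a..b}"
proof -
  define r where "r = b - a"
  define B where "B s = s powr (mu - 1) * (1 - s) powr (nu - 1)" for s :: real
  have r: "r > 0" using ab by (simp add: r_def)
  have "((\<lambda>t. B ((1/r) *\<^sub>R t + (- a / r))) has_integral (Beta mu nu /\<^sub>R (1/r) ^ DIM(real)))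
      (cbox ((0 - (- a / r)) /\<^sub>R (1/r)) ((1 - (- a / r)) /\<^sub>R (1/r)))"
    by (rule has_integral_affinity') (use has_integral_Beta_real[OF mu nu] r in \<open>auto simp: B_def\<close>)
  moreover have "cbox ((0 - (- a / r)) /\<^sub>R (1/r)) ((1 - (- a / r)) /\<^sub>R (1/r)) = {a..b}"
    using r by (simp add: r_def field_simps)
  moreover have "(\<lambda>t. B ((1/r) *\<^sub>R t + (- a / r)))
      = (\<lambda>t. ((t - a) / r) powr (mu - 1) * ((b - t) / r) powr (nu - 1))"
  proof -
    have "(1/r) *\<^sub>R t + (- a / r) = (t - a) / r" "1 - (t - a) / r = (b - t) / r" for t
      using r by (simp_all add: diff_divide_distrib) (simp add: r_def divide_simps)
    then show ?thesis by (simp add: B_def)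
  qed
  moreover have "Beta mu nu /\<^sub>R (1/r) ^ DIM(real) = r * Beta mu nu" by simp
  ultimately have "((\<lambda>t. ((t - a) / r) powr (mu - 1) * ((b - t) / r) powr (nu - 1)) has_integral
          r * Beta mu nu) {a..b}"
    by (simp only:)
  then have "((\<lambda>t. r powr (mu + nu - 2) * (((t - a) / r) powr (mu - 1) * ((b - t) / r) powr (nu - 1)))
      has_integral r powr (mu + nu - 2) * (r * Beta mu nu)) {a..b}"
    by (rule has_integral_mult_right)
  moreover have "r powr (mu + nu - 2) * (((t - a) / r) powr (mu - 1) * ((b - t) / r) powr (nu - 1))
      = (t - a) powr (mu - 1) * (b - t) powr (nu - 1)" if "t \<in> {a..b}" for t
  proof -
    have "r powr (mu - 1) * r powr (nu - 1) = r powr (mu + nu - 2)"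
      by (simp add: powr_add[symmetric])
    then show ?thesis using that r by (simp add: powr_divide field_simps)
  qed
  moreover have "r powr (mu + nu - 2) * (r * Beta mu nu) = r powr (mu + nu - 1) * Beta mu nu"
    using powr_add[of r "mu + nu - 2" 1] r by simp
  ultimately show ?thesis
    unfolding r_def by (metis (no_types, lifting) has_integral_eq)
qed

lemma powr_mult_power:
  fixes u p :: real assumes "u \<ge> 0"
  shows "u powr p * u ^ k = u powr (p + real k)"
  using assms by (cases "u = 0") (simp_all add: powr_add powr_realpow)

lemma mult_real_of_nat_power_pred: "u * (real k * u ^ (k - 1)) = real k * u ^ k"
  by (cases k) simp_all

definition abel_plus :: "real \<Rightarrow> (real \<Rightarrow> real) \<Rightarrow> real \<Rightarrow> real" where
  "abel_plus lam f y = (1 + y) powr (- lam) *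
     integral {-1..y} (\<lambda>t. (y - t) powr (-1/2) * (1 + t) powr (lam - 1/2) * f t)"

definition abel_minus :: "real \<Rightarrow> (real \<Rightarrow> real) \<Rightarrow> real \<Rightarrow> real" where
  "abel_minus lam f y = (1 - y) powr (- lam) *
     integral {y..1} (\<lambda>t. (t - y) powr (-1/2) * (1 - t) powr (lam - 1/2) * f t)"

lemma D_plus_eq_abel_plus:
  "D_plus lam f x = (1 + x) * vector_derivative (abel_plus lam f) (at x within {-1..1})"
  unfolding D_plus_def abel_plus_def[abs_def] ..

lemma D_minus_eq_abel_minus:
  "D_minus lam f x = (1 - x) * vector_derivative (abel_minus lam f) (at x within {-1..1})"
  unfolding D_minus_def abel_minus_def[abs_def] ..

lemma abel_plus_poly:
  fixes lam y :: real assumes lam: "lam > -1/2" and y: "y > -1"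
  shows "abel_plus lam (\<lambda>t. \<Sum>k\<le>N. a k * (1 + t) ^ k) y
    = (\<Sum>k\<le>N. a k * Beta (lam + real k + 1/2) (1/2) * (1 + y) ^ k)"
proof -
  define B where "B k = Beta (lam + real k + 1/2) (1/2)" for k
  have "((\<lambda>t. \<Sum>k\<le>N. a k * ((t - -1) powr (lam + real k + 1/2 - 1) * (y - t) powr (1/2 - 1)))
      has_integral (\<Sum>k\<le>N. a k * ((1 + y) powr (lam + real k) * B k))) {-1..y}"
    unfolding B_def using lam y
    by (intro has_integral_sum has_integral_mult_right has_integral_eq_rhs[OF has_integral_Beta_interval])
      (auto simp: add_ac)
  then have "((\<lambda>t. (y - t) powr (-1/2) * (1 + t) powr (lam - 1/2) * (\<Sum>k\<le>N. a k * (1 + t) ^ k))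
      has_integral (\<Sum>k\<le>N. a k * ((1 + y) powr (lam + real k) * B k))) {-1..y}"
  proof (rule has_integral_eq[rotated], unfold sum_distrib_left)
    fix t assume "t \<in> {-1..y}"
    then have "(1 + t) powr (lam - 1/2) * (1 + t) ^ k = (1 + t) powr (lam + real k + 1/2 - 1)" for k
      using powr_mult_power[of "1 + t" "lam - 1/2" k] by (simp add: algebra_simps)
    then show "(\<Sum>k\<le>N. a k * ((t - -1) powr (lam + real k + 1/2 - 1) * (y - t) powr (1/2 - 1)))
        = (\<Sum>k\<le>N. (y - t) powr (-1/2) * (1 + t) powr (lam - 1/2) * (a k * (1 + t) ^ k))"
      by (intro sum.cong) (simp_all add: algebra_simps)
  qed
  then have "abel_plus lam (\<lambda>t. \<Sum>k\<le>N. a k * (1 + t) ^ k) y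
      = (1 + y) powr (- lam) * (\<Sum>k\<le>N. a k * ((1 + y) powr (lam + real k) * B k))"
    unfolding abel_plus_def by (simp add: integral_unique)
  also have "\<dots> = (\<Sum>k\<le>N. a k * B k * ((1 + y) powr (- lam) * (1 + y) powr (lam + real k)))"
    by (simp add: sum_distrib_left mult_ac)
  also have "\<dots> = (\<Sum>k\<le>N. a k * B k * (1 + y) ^ k)"
    using y by (simp add: powr_add[symmetric] powr_realpow)
  finally show ?thesis unfolding B_def .
qed

lemma abel_minus_eq_abel_plus_reflect: "abel_minus lam f y = abel_plus lam (\<lambda>t. f (- t)) (- y)"
proof -
  define F where "F t = (t - y) powr (-1/2) * (1 - t) powr (lam - 1/2) * f t" for t
  have "integral {-1..-y} (\<lambda>t. F (- t)) = integral {y..1} F"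
    using integral_reflect_real[of 1 y F] by simp
  moreover have "(\<lambda>t. F (- t)) = (\<lambda>t. (- y - t) powr (-1/2) * (1 + t) powr (lam - 1/2) * f (- t))"
    by (simp add: F_def minus_diff_commute)
  ultimately show ?thesis unfolding abel_minus_def abel_plus_def F_def by simp
qed

lemma abel_minus_poly:
  fixes lam y :: real assumes lam: "lam > -1/2" and y: "y < 1"
  shows "abel_minus lam (\<lambda>t. \<Sum>k\<le>N. a k * (1 - t) ^ k) y
    = (\<Sum>k\<le>N. a k * Beta (lam + real k + 1/2) (1/2) * (1 - y) ^ k)"
  using abel_plus_poly[OF lam, where y = "- y" and N = N and a = a] y
  by (simp add: abel_minus_eq_abel_plus_reflect)

lemma vector_derivative_within_Icc_cong:
  fixes f g :: "real \<Rightarrow> real"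
  assumes "a < b" "x \<in> {a..b}" "e > 0" "\<And>y. y \<in> {a..b} \<Longrightarrow> dist y x < e \<Longrightarrow> g y = f y"
    and "(g has_real_derivative D) (at x)"
  shows "vector_derivative f (at x within {a..b}) = D"
proof -
  have "(g has_vector_derivative D) (at x within {a..b})"
    using assms(5)
    by (simp add: has_real_derivative_iff_has_vector_derivative has_vector_derivative_at_within)
  then have "(f has_vector_derivative D) (at x within {a..b})"
    by (rule has_vector_derivative_transform_within) (use assms in auto)
  then show ?thesis using vector_derivative_within_cbox[of a b x f D] assms(1,2) by simp
qed

lemma D_plus_poly:
  fixes lam x :: real assumes lam: "lam > -1/2" and x: "x \<in> {-1..1}"
  shows "D_plus lam (\<lambda>t. \<Sum>k\<le>N. a k * (1 + t) ^ k) x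
    = (\<Sum>k\<le>N. real k * a k * Beta (lam + real k + 1/2) (1/2) * (1 + x) ^ k)"
proof (cases "x = -1")
  \<comment> \<open>At x = -1 the factor 1 + x makes the (possibly junk) derivative irrelevant.\<close>
  case False
  then have "x > -1" using x by simp
  define B where "B k = Beta (lam + real k + 1/2) (1/2)" for k
  have "((\<lambda>y. \<Sum>k\<le>N. a k * B k * (1 + y) ^ k) has_real_derivative
      (\<Sum>k\<le>N. a k * B k * (real k * (1 + x) ^ (k - 1)))) (at x)"
    by (auto intro!: derivative_eq_intros sum.cong simp: mult_ac)
  then have "vector_derivative (abel_plus lam (\<lambda>t. \<Sum>k\<le>N. a k * (1 + t) ^ k)) (at x within {-1..1})
      = (\<Sum>k\<le>N. a k * B k * (real k * (1 + x) ^ (k - 1)))"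
    by (rule vector_derivative_within_Icc_cong[where e = "1 + x", rotated 4])
      (use x \<open>x > -1\<close> in \<open>auto simp: abel_plus_poly[OF lam] B_def dist_real_def\<close>)
  then have "D_plus lam (\<lambda>t. \<Sum>k\<le>N. a k * (1 + t) ^ k) x
      = (\<Sum>k\<le>N. a k * B k * ((1 + x) * (real k * (1 + x) ^ (k - 1))))"
    unfolding D_plus_eq_abel_plus by (simp add: sum_distrib_left mult_ac)
  then show ?thesis by (simp only: mult_real_of_nat_power_pred) (simp add: B_def mult_ac)
qed (simp add: D_plus_eq_abel_plus)

lemma D_minus_poly:
  fixes lam x :: real assumes lam: "lam > -1/2" and x: "x \<in> {-1..1}"
  shows "D_minus lam (\<lambda>t. \<Sum>k\<le>N. a k * (1 - t) ^ k) x
    = - (\<Sum>k\<le>N. real k * a k * Beta (lam + real k + 1/2) (1/2) * (1 - x) ^ k)"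
proof (cases "x = 1")
  case False
  then have "x < 1" using x by simp
  define B where "B k = Beta (lam + real k + 1/2) (1/2)" for k
  have "((\<lambda>y. \<Sum>k\<le>N. a k * B k * (1 - y) ^ k) has_real_derivative
      - (\<Sum>k\<le>N. a k * B k * (real k * (1 - x) ^ (k - 1)))) (at x)"
    by (auto intro!: derivative_eq_intros sum.cong simp: mult_ac sum_negf[symmetric])
  then have "vector_derivative (abel_minus lam (\<lambda>t. \<Sum>k\<le>N. a k * (1 - t) ^ k)) (at x within {-1..1})
      = - (\<Sum>k\<le>N. a k * B k * (real k * (1 - x) ^ (k - 1)))"
    by (rule vector_derivative_within_Icc_cong[where e = "1 - x", rotated 4])
      (use x \<open>x < 1\<close> in \<open>auto simp: abel_minus_poly[OF lam] B_def dist_real_def\<close>)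
  then have "D_minus lam (\<lambda>t. \<Sum>k\<le>N. a k * (1 - t) ^ k) x
      = - (\<Sum>k\<le>N. a k * B k * ((1 - x) * (real k * (1 - x) ^ (k - 1))))"
    unfolding D_minus_eq_abel_minus by (simp add: sum_distrib_left mult_ac)
  then show ?thesis by (simp only: mult_real_of_nat_power_pred) (simp add: B_def mult_ac)
qed (simp add: D_minus_eq_abel_minus)

section \<open>Beta values and terminating hypergeometric series\<close>

lemma Beta_add_nat:
  fixes a b :: real assumes a: "a > 0" and b: "b > 0"
  shows "Beta (a + real k) b = Beta a b * pochhammer a k / pochhammer (a + b) k"
proof -
  have "pochhammer a k = Gamma (a + real k) / Gamma a"
    by (rule pochhammer_Gamma) (use a in \<open>auto elim!: nonpos_Ints_cases\<close>)
  moreover have "pochhammer (a + b) k = Gamma (a + b + real k) / Gamma (a + b)"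
    by (rule pochhammer_Gamma) (use a b in \<open>auto elim!: nonpos_Ints_cases\<close>)
  moreover have "Gamma a > 0" "Gamma (a + b) > 0" "Gamma (a + b + real k) > 0"
    using a b by simp_all
  ultimately show ?thesis unfolding Beta_def by (simp add: field_simps add_ac)
qed

lemma c_const_eq_Beta: "c_const n lam = Beta (lam + 1/2) (1/2) * pochhammer (2 * lam) n / fact n"
proof -
  have "lam + 1/2 + 1/2 = lam + 1" by simp
  then show ?thesis unfolding c_const_def Beta_def Gamma_one_half_real by (simp add: ac_simps)
qed

lemma gegenbauer_coeff_Beta_Suc:
  fixes lam :: real assumes lam: "lam > -1/2"
  shows "real (Suc j) * gegenbauer_coeff lam n (Suc j) * Beta (lam + real (Suc j) + 1/2) (1/2)
    = - (c_const n lam * (real n * (real n + 2 * lam) / (lam + 1))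
         * hyp2F1_coeff (1 - real n) (real n + 2 * lam + 1) (lam + 2) j / 2 ^ Suc j)"
proof -
  \<comment> \<open>Opaque names stop field_simps from distributing these factors.\<close>
  define h where "h = pochhammer (lam + 1/2) (Suc j)"
  define q where "q = pochhammer (lam + 2) j"
  define L where "L = lam + 1"
  define S where "S = real (Suc j)"
  have B: "Beta (lam + S + 1/2) (1/2) = Beta (lam + 1/2) (1/2) * h / (L * q)"
    using Beta_add_nat[of "lam + 1/2" "1/2" "Suc j"] lam
    by (simp add: h_def q_def L_def S_def pochhammer_rec add_ac)
  have p1: "pochhammer (- real n) (Suc j) = - real n * pochhammer (1 - real n) j"
    by (simp add: pochhammer_rec add.commute)
  have p2: "pochhammer (real n + 2 * lam) (Suc j) = (real n + 2 * lam) * pochhammer (real n + 2 * lam + 1) j"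
    by (simp add: pochhammer_rec)
  have "h > 0" "q > 0" "L > 0" "S > 0"
    using lam by (auto simp: h_def q_def L_def S_def intro!: pochhammer_pos)
  then show ?thesis
    unfolding gegenbauer_coeff_def hyp2F1_coeff_def c_const_eq_Beta p1 p2 fact_Suc
      h_def[symmetric] q_def[symmetric] L_def[symmetric] S_def[symmetric] B
    by (simp add: field_simps)
qed

lemma sum_gegenbauer_coeff_Beta:
  fixes lam u :: real assumes lam: "lam > -1/2"
  shows "(\<Sum>k\<le>n. real k * gegenbauer_coeff lam n k * Beta (lam + real k + 1/2) (1/2) * u ^ k)
    = - (c_const n lam * (real n * (real n + 2 * lam) / (lam + 1)) * (u / 2)
         * (\<Sum>j<n. hyp2F1_coeff (1 - real n) (real n + 2 * lam + 1) (lam + 2) j * (u / 2) ^ j))"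
proof -
  have "(\<Sum>k\<le>n. real k * gegenbauer_coeff lam n k * Beta (lam + real k + 1/2) (1/2) * u ^ k)
      = (\<Sum>j<n. real (Suc j) * gegenbauer_coeff lam n (Suc j) * Beta (lam + real (Suc j) + 1/2) (1/2)
          * u ^ Suc j)"
    unfolding lessThan_Suc_atMost[symmetric] sum.lessThan_Suc_shift by simp
  also have "\<dots> = (\<Sum>j<n. - (c_const n lam * (real n * (real n + 2 * lam) / (lam + 1)) * (u / 2)
      * (hyp2F1_coeff (1 - real n) (real n + 2 * lam + 1) (lam + 2) j * (u / 2) ^ j)))"
    unfolding gegenbauer_coeff_Beta_Suc[OF lam] by (simp add: power_divide field_simps)
  finally show ?thesis by (simp add: sum_negf sum_distrib_left mult_ac)
qed

lemma sum_hyp2F1_coeff_at_1: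
  fixes b c :: real assumes c: "c > 0"
  shows "(\<Sum>k\<le>m. hyp2F1_coeff (- real m) b c k) = pochhammer (c - b) m / pochhammer c m"
proof -
  have "\<forall>i \<in> {0..<m}. c \<noteq> - of_nat i" using c by auto
  from Vandermonde_pochhammer[OF this, of b] show ?thesis
    unfolding hyp2F1_coeff_def atMost_atLeast0 by (simp add: ac_simps)
qed

lemma hyp2F1_coeff_add_binomial:
  "hyp2F1_coeff a b c (i + l) * real ((i + l) choose i)
    = hyp2F1_coeff a b c i * hyp2F1_coeff (a + real i) (b + real i) (c + real i) l"
proof (cases "pochhammer c i = 0")
  case True
  then have "pochhammer c (i + l) = 0" by (simp add: pochhammer_product')
  with True show ?thesis by (simp add: hyp2F1_coeff_def)
next
  case False
  then have "pochhammer c (i + l) \<noteq> 0 \<longleftrightarrow> pochhammer (c + real i) l \<noteq> 0"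
    by (simp add: pochhammer_product')
  then show ?thesis
    unfolding hyp2F1_coeff_def pochhammer_product' binomial_fact[of i "i + l", OF le_add1]
    using False by (auto simp: field_simps)
qed

text \<open>The terminating case of 2F1(a, b; c; 1 - z) = (c - b)_m/(c)_m 2F1(a, b; a + b - c + 1; z),
  a = -m: expand (1 - z)^j binomially and sum the inner series by Chu-Vandermonde.\<close>
lemma hyp2F1_coeff_reflect:
  fixes b c z :: real assumes c: "c > 0" and d: "b - c - real m + 1 > 0"
  shows "pochhammer c m * (\<Sum>j\<le>m. hyp2F1_coeff (- real m) b c j * (1 - z) ^ j)
    = pochhammer (c - b) m * (\<Sum>i\<le>m. hyp2F1_coeff (- real m) b (b - c - real m + 1) i * z ^ i)"
proof -
  define d where "d = b - c - real m + 1"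
  define g where "g i j = hyp2F1_coeff (- real m) b c j * real (j choose i)" for i j
  have inner: "(\<Sum>j\<in>{i..m}. g i j)
      = hyp2F1_coeff (- real m) b c i * pochhammer (c - b) (m - i) / pochhammer (c + real i) (m - i)"
    if "i \<le> m" for i
  proof -
    have "(\<Sum>j\<in>{i..m}. g i j) = (\<Sum>l\<le>m - i. g i (i + l))"
      using that by (intro sum.reindex_bij_witness[where i = "\<lambda>l. i + l" and j = "\<lambda>j. j - i"]) auto
    also have "\<dots> = hyp2F1_coeff (- real m) b c i
        * (\<Sum>l\<le>m - i. hyp2F1_coeff (- real (m - i)) (b + real i) (c + real i) l)"
      using that by (simp add: g_def hyp2F1_coeff_add_binomial sum_distrib_left of_nat_diff)
    finally show ?thesis using c by (simp add: sum_hyp2F1_coeff_at_1)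
  qed
  have "(\<Sum>j\<le>m. hyp2F1_coeff (- real m) b c j * (1 - z) ^ j)
      = (\<Sum>j\<le>m. \<Sum>i\<le>j. g i j * (- z) ^ i)"
    by (simp add: g_def binomial_ring[of "- z" 1, simplified] sum_distrib_left mult_ac)
  also have "\<dots> = (\<Sum>j\<le>m. \<Sum>i | i \<in> {..m} \<and> i \<le> j. g i j * (- z) ^ i)"
    by (intro sum.cong) auto
  also have "\<dots> = (\<Sum>i\<le>m. \<Sum>j | j \<in> {..m} \<and> i \<le> j. g i j * (- z) ^ i)"
    by (rule sum.swap_restrict) simp_all
  also have "\<dots> = (\<Sum>i\<le>m. (\<Sum>j\<in>{i..m}. g i j) * (- z) ^ i)"
    by (auto simp: sum_distrib_right intro!: sum.cong)
  finally have expand: "pochhammer c m * (\<Sum>j\<le>m. hyp2F1_coeff (- real m) b c j * (1 - z) ^ j)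
      = (\<Sum>i\<le>m. pochhammer c m * (\<Sum>j\<in>{i..m}. g i j) * (- z) ^ i)"
    by (simp add: sum_distrib_left mult_ac)
  show ?thesis
    unfolding expand d_def[symmetric] sum_distrib_left[of "pochhammer (c - b) m"]
  proof (intro sum.cong refl)
    fix i assume "i \<in> {..m}"
    then have i: "i \<le> m" by simp
    have split_c: "pochhammer c m = pochhammer c i * pochhammer (c + real i) (m - i)"
      using pochhammer_product'[of c i "m - i"] i by simp
    have split_cb: "pochhammer (c - b) m = pochhammer (c - b) (m - i) * ((-1) ^ i * pochhammer d i)"
      using pochhammer_product'[of "c - b" "m - i" i] pochhammer_minus[of "d - 1 + real i" i] i
      by (simp add: d_def of_nat_diff algebra_simps)
    have "pochhammer c i > 0" "pochhammer (c + real i) (m - i) > 0" "pochhammer d i > 0"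
      using c d by (auto simp: d_def intro!: pochhammer_pos)
    then show "pochhammer c m * (\<Sum>j\<in>{i..m}. g i j) * (- z) ^ i
        = pochhammer (c - b) m * (hyp2F1_coeff (- real m) b d i * z ^ i)"
      unfolding inner[OF i] split_c split_cb hyp2F1_coeff_def
      by (simp add: power_minus[of z] field_simps)
  qed
qed

lemma hyp2F1_eq_sum_lessThan:
  "n = Suc m \<Longrightarrow> hyp2F1 (1 - real n) b c z = (\<Sum>j<n. hyp2F1_coeff (1 - real n) b c j * z ^ j)"
  using hyp2F1_eq_sum_hyp2F1_coeff[of m b c z] by (simp add: lessThan_Suc_atMost)

lemma hyp2F1_gegenbauer_reflect:
  fixes lam z :: real assumes lam: "lam > -1/2" and n: "n = Suc m"
  shows "hyp2F1 (1 - real n) (real n + 2 * lam + 1) (lam + 1) (1 - z)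
    = (-1) ^ m * ((real n + lam) / (lam + 1)) * hyp2F1 (1 - real n) (real n + 2 * lam + 1) (lam + 2) z"
proof -
  define b where "b = real n + 2 * lam + 1"
  define p where "p = pochhammer (lam + 1) m"
  define q where "q = pochhammer (lam + 2) m"
  have a: "1 - real n = - real m" using n by simp
  have p: "p > 0" using lam by (auto simp: p_def intro!: pochhammer_pos)
  have cb: "pochhammer (lam + 1 - b) m = (-1) ^ m * q"
    using pochhammer_minus[of "real n + lam" m] n by (simp add: b_def q_def algebra_simps)
  have d: "b - (lam + 1) - real m + 1 = lam + 2" using n by (simp add: b_def)
  define F1 where "F1 = (\<Sum>j\<le>m. hyp2F1_coeff (- real m) b (lam + 1) j * (1 - z) ^ j)"
  define F2 where "F2 = (\<Sum>j\<le>m. hyp2F1_coeff (- real m) b (lam + 2) j * z ^ j)"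
  have "p * F1 = (-1) ^ m * q * F2"
    using hyp2F1_coeff_reflect[of "lam + 1" b m z, unfolded cb d] lam by (simp add: p_def F1_def F2_def)
  then have "F1 = (-1) ^ m * (q / p) * F2" using p by (simp add: field_simps)
  moreover have "q / p = (real n + lam) / (lam + 1)"
    using pochhammer_rec[of "lam + 1" m] pochhammer_rec'[of "lam + 1" m] n p lam
    by (simp add: p_def q_def field_simps)
  ultimately show ?thesis
    unfolding b_def[symmetric] a hyp2F1_eq_sum_hyp2F1_coeff F1_def[symmetric] F2_def[symmetric] by simp
qed

lemma D_minus_gegenbauer:
  fixes lam x :: real assumes lam: "lam > -1/2" and x: "x \<in> {-1..1}"
  shows "D_minus lam (gegenbauer n lam) x =
    c_const n lam * (real n * (real n + 2 * lam) / (lam + 1)) * ((1 - x) / 2) *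
    hyp2F1 (1 - real n) (real n + 2 * lam + 1) (lam + 2) ((1 - x) / 2)"
proof -
  have "gegenbauer n lam = (\<lambda>t. \<Sum>k\<le>n. gegenbauer_coeff lam n k * (1 - t) ^ k)"
    using gegenbauer_expansion[of lam 1 n] lam by (simp add: fun_eq_iff)
  then have sum_form: "D_minus lam (gegenbauer n lam) x =
      c_const n lam * (real n * (real n + 2 * lam) / (lam + 1)) * ((1 - x) / 2) *
      (\<Sum>j<n. hyp2F1_coeff (1 - real n) (real n + 2 * lam + 1) (lam + 2) j * ((1 - x) / 2) ^ j)"
    using D_minus_poly[OF lam x] sum_gegenbauer_coeff_Beta[OF lam] by simp
  show ?thesis
  proof (cases n)
    case (Suc m)
    show ?thesis using sum_form by (simp only: hyp2F1_eq_sum_lessThan[OF Suc])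
  qed (use sum_form in simp)
qed

lemma D_plus_gegenbauer:
  fixes lam x :: real assumes lam: "lam > -1/2" and x: "x \<in> {-1..1}"
  shows "D_plus lam (gegenbauer n lam) x =
    c_const n lam * (real n * (real n + 2 * lam) / (real n + lam)) * ((1 + x) / 2) *
    hyp2F1 (1 - real n) (real n + 2 * lam + 1) (lam + 1) ((1 - x) / 2)"
proof -
  define S where
    "S = (\<Sum>j<n. hyp2F1_coeff (1 - real n) (real n + 2 * lam + 1) (lam + 2) j * ((1 + x) / 2) ^ j)"
  have expansion:
    "gegenbauer n lam = (\<lambda>t. \<Sum>k\<le>n. ((-1) ^ n * gegenbauer_coeff lam n k) * (1 + t) ^ k)"
    using gegenbauer_expansion[of lam "-1" n] lam by (simp add: fun_eq_iff sum_distrib_left mult.assoc)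
  have "D_plus lam (gegenbauer n lam) x = (-1) ^ n *
      (\<Sum>k\<le>n. real k * gegenbauer_coeff lam n k * Beta (lam + real k + 1/2) (1/2) * (1 + x) ^ k)"
    unfolding expansion D_plus_poly[OF lam x] by (simp add: sum_distrib_left mult_ac)
  also have "\<dots> = (-1) ^ Suc n *
      (c_const n lam * (real n * (real n + 2 * lam) / (lam + 1)) * ((1 + x) / 2) * S)"
    unfolding sum_gegenbauer_coeff_Beta[OF lam] S_def by simp
  finally have sum_form: "D_plus lam (gegenbauer n lam) x
      = (-1) ^ Suc n * (c_const n lam * (real n * (real n + 2 * lam) / (lam + 1)) * ((1 + x) / 2) * S)" .
  show ?thesis
  proof (cases n)
    case (Suc m)
    have "(1 - x) / 2 = 1 - (1 + x) / 2" by (simp add: field_simps)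
    then have reflect: "hyp2F1 (1 - real n) (real n + 2 * lam + 1) (lam + 1) ((1 - x) / 2)
        = (-1) ^ m * ((real n + lam) / (lam + 1)) * S"
      unfolding S_def hyp2F1_eq_sum_lessThan[OF Suc, symmetric]
      by (simp only: hyp2F1_gegenbauer_reflect[OF lam Suc])
    have sign: "(-1::real) ^ Suc n = (-1) ^ m" using Suc by simp
    have cancel: "s * (c * (A / L) * h * T) = c * (A / N) * h * (s * (N / L) * T)"
      if "N \<noteq> 0" for s c A L N h T :: real
      using that by (simp add: field_simps)
    show ?thesis unfolding sum_form reflect sign by (rule cancel) (use lam Suc in simp)
  qed (use sum_form in simp)
qed

theorem proposition3p7:
  fixes lam x :: real and n :: nat
  assumes "lam > 0" and "x \<in> {-1..1}"
  shows "(D_plus lam (gegenbauer n lam) x =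
           c_const n lam * (real n * (real n + 2 * lam) / (real n + lam)) * ((1 + x) / 2) *
           hyp2F1 (1 - real n) (real n + 2 * lam + 1) (lam + 1) ((1 - x) / 2)) \<and>
         (D_minus lam (gegenbauer n lam) x =
           c_const n lam * (real n * (real n + 2 * lam) / (lam + 1)) * ((1 - x) / 2) *
           hyp2F1 (1 - real n) (real n + 2 * lam + 1) (lam + 2) ((1 - x) / 2))"
proof -
  have "lam > -1/2" using assms(1) by simp
  then show ?thesis using D_plus_gegenbauer D_minus_gegenbauer assms(2) by blast
qed

end
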